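(* Let $d,n\ge 1$, let $\boldsymbol{a}_1,\ldots,\boldsymbol{a}_n\in\mathbf{R}^d$, let $w_1,\ldots,w_n>0$, fix $\varepsilon>0$ and $0<p\le 2$. Let $\boldsymbol{x}^{(0)}\in\mathbf{R}^d$ be arbitrary and define, for $t\ge 0$, $$\mu_j^{(t)}=w_j\,(\lVert\boldsymbol{x}^{(t)}-\boldsymbol{a}_j\rVert^2+\varepsilon)^{p/2-1},\qquad \boldsymbol{x}^{(t+1)}=\frac{\sum_j\mu_j^{(t)}\boldsymbol{a}_j}{\sum_j\mu_j^{(t)}}.$$ Then $\lVert\boldsymbol{x}^{(t)}-\boldsymbol{x}^{(t+1)}\rVert\to 0$ as $t\to\infty$.
   Context: $\lVert\cdot\rVert$ is the Euclidean norm on $\mathbf{R}^d$. *)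

theory Defs
  imports "HOL-Analysis.Analysis"
begin

end

theory Submission
  imports Defs
begin

text \<open>The iteration is a majorize--minimize scheme for the smoothed objective
  \<open>F y = \<Sum>\<^sub>j w\<^sub>j (\<parallel>y - a\<^sub>j\<parallel>\<^sup>2 + \<epsilon>)\<^sup>q\<close> with \<open>q = p/2 \<le> 1\<close>. By concavity of
  \<open>s \<mapsto> s\<^sup>q\<close>, \<open>F\<close> lies below its tangent majorant at \<open>x\<^sup>(\<^sup>t\<^sup>)\<close>, a weighted sum of squared
  distances whose minimizer is exactly \<open>x\<^sup>(\<^sup>t\<^sup>+\<^sup>1\<^sup>)\<close>; this yields
  \<open>F(x\<^sup>(\<^sup>t\<^sup>+\<^sup>1\<^sup>)) \<le> F(x\<^sup>(\<^sup>t\<^sup>)) - q M\<^sub>t \<parallel>x\<^sup>(\<^sup>t\<^sup>) - x\<^sup>(\<^sup>t\<^sup>+\<^sup>1\<^sup>)\<parallel>\<^sup>2\<close> with \<open>M\<^sub>t = \<Sum>\<^sub>j \<mu>\<^sub>j\<^sup>(\<^sup>t\<^sup>)\<close>.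
  The iterates stay in a bounded set (they are convex combinations of the \<open>a\<^sub>j\<close>), so \<open>M\<^sub>t\<close>
  is bounded away from zero, and the monotone convergence of \<open>F(x\<^sup>(\<^sup>t\<^sup>))\<close> forces the steps
  to vanish.\<close>

definition smoothed_objective ::
    "(nat \<Rightarrow> real) \<Rightarrow> (nat \<Rightarrow> 'a::real_normed_vector) \<Rightarrow> nat \<Rightarrow> real \<Rightarrow> real \<Rightarrow> 'a \<Rightarrow> real" where
  "smoothed_objective w a n \<epsilon> q y = (\<Sum>j<n. w j * (norm (y - a j) ^ 2 + \<epsilon>) powr q)"

definition irls_weight ::
    "(nat \<Rightarrow> real) \<Rightarrow> (nat \<Rightarrow> 'a::real_normed_vector) \<Rightarrow> real \<Rightarrow> real \<Rightarrow> 'a \<Rightarrow> nat \<Rightarrow> real" where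
  "irls_weight w a \<epsilon> q x j = w j * (norm (x - a j) ^ 2 + \<epsilon>) powr (q - 1)"

lemma powr_le_tangent_line:
  fixes u v q :: real
  assumes "u > 0" "v > 0" "0 < q" "q \<le> 1"
  shows "u powr q \<le> v powr q + q * v powr (q - 1) * (u - v)"
proof -
  have young: "u powr q * v powr (1 - q) \<le> q * u + (1 - q) * v"
    using Youngs_inequality_0[of q "1 - q" u v] assms by simp
  have "u powr q = u powr q * v powr (1 - q) * v powr (q - 1)"
    using assms by (simp add: mult.assoc flip: powr_add)
  also have "\<dots> \<le> (q * u + (1 - q) * v) * v powr (q - 1)"
    using young by (rule mult_right_mono) simp
  also have "\<dots> = q * u * v powr (q - 1) + (1 - q) * (v * v powr (q - 1))"
    by (simp add: algebra_simps)
  also have "\<dots> = v powr q + q * v powr (q - 1) * (u - v)"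
    using powr_add[of v 1 "q - 1"] assms by (simp add: algebra_simps)
  finally show ?thesis .
qed

lemma weighted_mean_sq_dist_change:
  fixes \<mu> :: "nat \<Rightarrow> real" and a :: "nat \<Rightarrow> 'a::real_inner"
  assumes M: "M = (\<Sum>j<n. \<mu> j)" "M \<noteq> 0"
    and y: "y = (\<Sum>j<n. \<mu> j *\<^sub>R a j) /\<^sub>R M"
  shows "(\<Sum>j<n. \<mu> j * (norm (y - a j) ^ 2 - norm (x - a j) ^ 2)) = - M * norm (x - y) ^ 2"
proof -
  have sum_eq: "(\<Sum>j<n. \<mu> j *\<^sub>R a j) = M *\<^sub>R y"
    using M y by simp
  have "\<And>j. norm (y - a j) ^ 2 - norm (x - a j) ^ 2 = y \<bullet> y - x \<bullet> x - 2 * ((y - x) \<bullet> a j)"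
    by (simp add: power2_norm_eq_inner inner_diff_left inner_diff_right inner_commute algebra_simps)
  then have "(\<Sum>j<n. \<mu> j * (norm (y - a j) ^ 2 - norm (x - a j) ^ 2))
      = (\<Sum>j<n. \<mu> j) * (y \<bullet> y - x \<bullet> x) - 2 * ((y - x) \<bullet> (\<Sum>j<n. \<mu> j *\<^sub>R a j))"
    by (simp add: inner_sum_right sum_distrib_left sum_distrib_right sum_subtractf
        right_diff_distrib mult.left_commute)
  also have "\<dots> = M * (y \<bullet> y - x \<bullet> x) - 2 * M * ((y - x) \<bullet> y)"
    using M sum_eq by simp
  also have "\<dots> = - M * norm (x - y) ^ 2"
    by (simp add: power2_norm_eq_inner inner_diff_left inner_diff_right inner_commute algebra_simps)
  finally show ?thesis .
qed

lemma norm_weighted_mean_le: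
  fixes a :: "nat \<Rightarrow> 'a::real_normed_vector"
  assumes "\<And>j. j < n \<Longrightarrow> \<mu> j \<ge> 0" "(\<Sum>j<n. \<mu> j) > 0" "\<And>j. j < n \<Longrightarrow> norm (a j) \<le> S"
  shows "norm ((\<Sum>j<n. \<mu> j *\<^sub>R a j) /\<^sub>R (\<Sum>j<n. \<mu> j)) \<le> S"
proof -
  have "norm (\<Sum>j<n. \<mu> j *\<^sub>R a j) \<le> (\<Sum>j<n. \<mu> j * norm (a j))"
    using norm_sum[of "\<lambda>j. \<mu> j *\<^sub>R a j" "{..<n}"] assms(1) by simp
  also have "\<dots> \<le> (\<Sum>j<n. \<mu> j) * S"
    unfolding sum_distrib_right using assms(1,3) by (intro sum_mono mult_left_mono) auto
  finally show ?thesis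
    using assms(2) by (simp add: field_simps)
qed

lemma weighted_mean_iterates_bounded:
  fixes a x :: "nat \<Rightarrow> 'a::real_normed_vector"
  assumes "\<And>t j. j < n \<Longrightarrow> \<mu> t j \<ge> 0" "\<And>t. (\<Sum>j<n. \<mu> t j) > 0"
    and "\<And>t. x (Suc t) = (\<Sum>j<n. \<mu> t j *\<^sub>R a j) /\<^sub>R (\<Sum>j<n. \<mu> t j)"
  shows "norm (x t) \<le> max (norm (x 0)) (\<Sum>j<n. norm (a j))"
proof (cases t)
  case (Suc s)
  have "norm (x (Suc s)) \<le> (\<Sum>j<n. norm (a j))"
    unfolding assms(3) using assms(1,2) by (intro norm_weighted_mean_le member_le_sum) auto
  then show ?thesis
    using Suc by simp
qed simp

lemma smoothed_objective_nonneg: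
  assumes "\<And>j. j < n \<Longrightarrow> w j \<ge> 0"
  shows "smoothed_objective w a n \<epsilon> q y \<ge> 0"
  unfolding smoothed_objective_def using assms by (intro sum_nonneg mult_nonneg_nonneg) auto

lemma irls_weight_pos:
  assumes "w j > 0" "\<epsilon> > 0"
  shows "irls_weight w a \<epsilon> q x j > 0"
proof -
  have "norm (x - a j) ^ 2 + \<epsilon> > 0"
    using assms(2) by (simp add: add_nonneg_pos)
  then show ?thesis
    using assms(1) by (simp add: irls_weight_def)
qed

lemma irls_weight_sum_pos:
  assumes "\<And>j. j < n \<Longrightarrow> w j > 0" "\<epsilon> > 0" "0 < n"
  shows "(\<Sum>j<n. irls_weight w a \<epsilon> q x j) > 0"
  using assms by (intro sum_pos) (auto intro: irls_weight_pos)

lemma irls_weight_sum_ge: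
  assumes "\<And>j. j < n \<Longrightarrow> w j > 0" "\<epsilon> > 0" "q \<le> 1" "i < n" "norm (x - a i) \<le> B"
  shows "(\<Sum>j<n. irls_weight w a \<epsilon> q x j) \<ge> w i * (B ^ 2 + \<epsilon>) powr (q - 1)"
proof -
  have "norm (x - a i) ^ 2 \<le> B ^ 2"
    using assms(5) by (intro power_mono) auto
  then have "(B ^ 2 + \<epsilon>) powr (q - 1) \<le> (norm (x - a i) ^ 2 + \<epsilon>) powr (q - 1)"
    using assms(2,3) by (intro powr_mono2') (auto simp: add_nonneg_pos)
  then have "w i * (B ^ 2 + \<epsilon>) powr (q - 1) \<le> irls_weight w a \<epsilon> q x i"
    using assms(1)[OF assms(4)] by (simp add: irls_weight_def)
  also have "\<dots> \<le> (\<Sum>j<n. irls_weight w a \<epsilon> q x j)"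
    using assms(1,2,4) by (intro member_le_sum) (auto intro: less_imp_le irls_weight_pos)
  finally show ?thesis .
qed

lemma smoothed_objective_descent:
  fixes w :: "nat \<Rightarrow> real" and a :: "nat \<Rightarrow> 'a::real_inner" and \<epsilon> q :: real and x :: 'a
  defines "\<mu> \<equiv> irls_weight w a \<epsilon> q x"
  assumes "\<And>j. j < n \<Longrightarrow> w j > 0" "\<epsilon> > 0" "0 < q" "q \<le> 1"
    and "(\<Sum>j<n. \<mu> j) \<noteq> 0"
    and y: "y = (\<Sum>j<n. \<mu> j *\<^sub>R a j) /\<^sub>R (\<Sum>j<n. \<mu> j)"
  shows "smoothed_objective w a n \<epsilon> q y
      \<le> smoothed_objective w a n \<epsilon> q x - q * (\<Sum>j<n. \<mu> j) * norm (x - y) ^ 2"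
proof -
  have tangent: "w j * (norm (y - a j) ^ 2 + \<epsilon>) powr q
      \<le> w j * (norm (x - a j) ^ 2 + \<epsilon>) powr q
         + q * (\<mu> j * (norm (y - a j) ^ 2 - norm (x - a j) ^ 2))" if "j < n" for j
  proof -
    have "(norm (y - a j) ^ 2 + \<epsilon>) powr q \<le> (norm (x - a j) ^ 2 + \<epsilon>) powr q
        + q * (norm (x - a j) ^ 2 + \<epsilon>) powr (q - 1)
          * ((norm (y - a j) ^ 2 + \<epsilon>) - (norm (x - a j) ^ 2 + \<epsilon>))"
      using assms(3-5) by (intro powr_le_tangent_line) (auto simp: add_nonneg_pos)
    from mult_left_mono[OF this, of "w j"] assms(2)[OF that] show ?thesis
      by (simp add: \<mu>_def irls_weight_def algebra_simps)
  qed
  have "smoothed_objective w a n \<epsilon> q y \<le> smoothed_objective w a n \<epsilon> q x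
      + q * (\<Sum>j<n. \<mu> j * (norm (y - a j) ^ 2 - norm (x - a j) ^ 2))"
    using sum_mono[of "{..<n}", OF tangent]
    by (simp add: smoothed_objective_def sum.distrib sum_distrib_left)
  also have "(\<Sum>j<n. \<mu> j * (norm (y - a j) ^ 2 - norm (x - a j) ^ 2))
      = - (\<Sum>j<n. \<mu> j) * norm (x - y) ^ 2"
    using assms(6) y by (intro weighted_mean_sq_dist_change) auto
  finally show ?thesis
    by simp
qed

lemma steps_tendsto_zero_of_sufficient_decrease:
  fixes f d :: "nat \<Rightarrow> real"
  assumes "c > 0" "\<And>t. f t \<ge> b" "\<And>t. c * d t ^ 2 \<le> f t - f (Suc t)"
  shows "d \<longlonglongrightarrow> 0"
proof -
  have "decseq f"
  proof (rule decseq_SucI)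
    fix t
    show "f (Suc t) \<le> f t"
      using assms(3)[of t] assms(1) zero_le_power2[of "d t"] mult_nonneg_nonneg[of c "d t ^ 2"]
      by linarith
  qed
  then obtain L where L: "f \<longlonglongrightarrow> L"
    using decseq_convergent[of f b] assms(2) by blast
  have "(\<lambda>t. (f t - f (Suc t)) / c) \<longlonglongrightarrow> (L - L) / c"
    by (intro tendsto_intros L LIMSEQ_Suc[OF L]) (use assms(1) in simp)
  moreover have "d t ^ 2 \<le> (f t - f (Suc t)) / c" for t
    using assms(1) assms(3)[of t] by (simp add: pos_le_divide_eq mult.commute)
  ultimately have "(\<lambda>t. d t ^ 2) \<longlonglongrightarrow> 0"
    using tendsto_sandwich[of "\<lambda>_. 0" "\<lambda>t. d t ^ 2" sequentially "\<lambda>t. (f t - f (Suc t)) / c" 0]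
    by (simp add: always_eventually)
  then have "(\<lambda>t. sqrt (d t ^ 2)) \<longlonglongrightarrow> sqrt 0"
    by (rule tendsto_real_sqrt)
  then show ?thesis
    by (simp add: tendsto_rabs_zero_iff)
qed

theorem proposition3:
  fixes a :: "nat \<Rightarrow> 'a::euclidean_space"
    and w :: "nat \<Rightarrow> real"
    and n :: nat and \<epsilon> p :: real
    and x :: "nat \<Rightarrow> 'a"
  assumes "n \<ge> 1"
    and "\<And>j. j < n \<Longrightarrow> w j > 0"
    and "\<epsilon> > 0" and "0 < p" and "p \<le> 2"
    and "\<And>t. x (Suc t) =
          (\<Sum>j<n. (w j * (norm (x t - a j) ^ 2 + \<epsilon>) powr (p / 2 - 1)) *\<^sub>R a j)
          /\<^sub>R (\<Sum>j<n. w j * (norm (x t - a j) ^ 2 + \<epsilon>) powr (p / 2 - 1))"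
  shows "(\<lambda>t. norm (x t - x (Suc t))) \<longlonglongrightarrow> 0"
proof -
  define \<mu> where "\<mu> t = irls_weight w a \<epsilon> (p / 2) (x t)" for t
  define B where "B = max (norm (x 0)) (\<Sum>j<n. norm (a j)) + (\<Sum>j<n. norm (a j))"
  have n0: "0 < n"
    using assms(1) by simp
  have step: "x (Suc t) = (\<Sum>j<n. \<mu> t j *\<^sub>R a j) /\<^sub>R (\<Sum>j<n. \<mu> t j)" for t
    using assms(6)[of t] by (simp add: \<mu>_def irls_weight_def)
  have weight_sum_pos: "(\<Sum>j<n. \<mu> t j) > 0" for t
    unfolding \<mu>_def using assms(2,3) n0 by (rule irls_weight_sum_pos)
  have iterate_bound: "norm (x t) \<le> max (norm (x 0)) (\<Sum>j<n. norm (a j))" for t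
    by (rule weighted_mean_iterates_bounded[where \<mu> = \<mu>])
      (use assms(2,3) weight_sum_pos step in \<open>auto simp: \<mu>_def intro: less_imp_le irls_weight_pos\<close>)
  have "norm (a 0) \<le> (\<Sum>j<n. norm (a j))"
    using n0 by (intro member_le_sum) auto
  then have dist_bound: "norm (x t - a 0) \<le> B" for t
    using iterate_bound[of t] norm_triangle_ineq4[of "x t" "a 0"] unfolding B_def by linarith
  define c where "c = w 0 * (B ^ 2 + \<epsilon>) powr (p / 2 - 1)"
  have weight_sum_ge: "(\<Sum>j<n. \<mu> t j) \<ge> c" for t
    unfolding \<mu>_def c_def using assms(2,3,5) n0 dist_bound by (intro irls_weight_sum_ge) auto
  let ?F = "smoothed_objective w a n \<epsilon> (p / 2)"
  have decrease: "p / 2 * c * norm (x t - x (Suc t)) ^ 2 \<le> ?F (x t) - ?F (x (Suc t))" for t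
  proof -
    have "p / 2 * c * norm (x t - x (Suc t)) ^ 2
        \<le> p / 2 * (\<Sum>j<n. \<mu> t j) * norm (x t - x (Suc t)) ^ 2"
      using weight_sum_ge[of t] assms(4) by (intro mult_right_mono mult_left_mono) auto
    also have "\<dots> \<le> ?F (x t) - ?F (x (Suc t))"
      using smoothed_objective_descent[of n w \<epsilon> "p / 2" a "x t", folded \<mu>_def, OF _ _ _ _ _ step]
        weight_sum_pos[of t] assms(2-5) by simp
    finally show ?thesis .
  qed
  have objective_nonneg: "?F y \<ge> 0" for y
    using assms(2) by (intro smoothed_objective_nonneg less_imp_le)
  have "p / 2 * c > 0"
    using assms(2-4) n0 add_nonneg_pos[of "B ^ 2" \<epsilon>] by (simp add: c_def)
  then show ?thesis
    using objective_nonneg decrease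
    by (rule steps_tendsto_zero_of_sufficient_decrease[where f = "\<lambda>t. ?F (x t)"])
qed

end
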